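(* Let $G$ be a finite group and $H$ a normal subgroup of $G$ such that $G/H$ is cyclic. Suppose that the coset $Hx$ generates the quotient group $G/H$. Then the number of $G$-conjugacy classes contained in $Hx$ equals the number of integral $(G,H)$-classes contained in $H$.
   Context: For $g\in G$, the centralizing subgroup of $g$ with respect to $H$ is $HC_G(g)$; for a conjugacy class $X$ of $G$ it is $HC_G(g)$ for any $g\in X$. An integral $(G,H)$-class is a conjugacy class of $G$ whose centralizing subgroup with respect to $H$ is $G$ (equivalently, a $G$-class which does not split into several classes when the conjugation action is restricted to $H$). *)

theory Defs
  imports "HOL-Algebra.Algebra"
begin

definition conj_class :: "('a, 'b) monoid_scheme \<Rightarrow> 'a \<Rightarrow> 'a set" where
  "conj_class G g = {h \<otimes>\<^bsub>G\<^esub> g \<otimes>\<^bsub>G\<^esub> inv\<^bsub>G\<^esub> h | h. h \<in> carrier G}"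

definition conj_classes :: "('a, 'b) monoid_scheme \<Rightarrow> 'a set set" where
  "conj_classes G = {conj_class G g | g. g \<in> carrier G}"

definition centralizer :: "('a, 'b) monoid_scheme \<Rightarrow> 'a \<Rightarrow> 'a set" where
  "centralizer G g = {h \<in> carrier G. h \<otimes>\<^bsub>G\<^esub> g = g \<otimes>\<^bsub>G\<^esub> h}"

definition centralizing_subgroup :: "('a, 'b) monoid_scheme \<Rightarrow> 'a set \<Rightarrow> 'a \<Rightarrow> 'a set" where
  "centralizing_subgroup G H g = H <#>\<^bsub>G\<^esub> centralizer G g"

definition integral_class :: "('a, 'b) monoid_scheme \<Rightarrow> 'a set \<Rightarrow> 'a set \<Rightarrow> bool" where
  "integral_class G H C = (C \<in> conj_classes G \<and>
     (\<forall>g \<in> C. centralizing_subgroup G H g = carrier G))"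

end

theory Submission
  imports Defs
begin

text \<open>Summing \<open>|C(y)|\<close> over a conjugation-invariant set \<open>S\<close> gives \<open>|G|\<close> times the
  number of classes contained in \<open>S\<close>. The integral classes inside \<open>H\<close> make up the set \<open>I\<close>
  of those \<open>h \<in> H\<close> with \<open>H C(h) = G\<close>, so it suffices to show that \<open>|C(y)|\<close> has the same sum
  over \<open>Hx\<close> as \<open>|C(h)|\<close> over \<open>I\<close>. Because \<open>Hx\<close> generates \<open>G/H\<close>, a subgroup \<open>K\<close> satisfies
  \<open>HK = G\<close> iff \<open>K\<close> meets \<open>Hx\<close>; then \<open>K \<inter> Hx\<close> is a coset of \<open>H \<inter> K\<close>, and
  \<open>|H| |K| = |G| |H \<inter> K|\<close>. Counting the commuting pairs in \<open>H \<times> Hx\<close> in two ways shows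
  that \<open>|H \<inter> C(y)|\<close> summed over \<open>Hx\<close> equals \<open>|H \<inter> C(h)|\<close> summed over \<open>I\<close>, and the
  product formula turns this into the required identity.\<close>

lemma (in group) stabilizer_conjugation:
  assumes "z \<in> carrier G"
  shows "stabilizer G (\<lambda>g. \<lambda>h\<in>carrier G. g \<otimes> h \<otimes> inv g) z = centralizer G z"
  using assms unfolding stabilizer_def centralizer_def
  by (auto simp: inv_solve_right')

lemma (in group) centralizer_subgroup:
  assumes "z \<in> carrier G"
  shows "subgroup (centralizer G z) G"
  using group_action.stabilizer_subgroup[OF action_by_conjugation assms]
  by (simp add: stabilizer_conjugation assms)

lemma (in group) centralizer_subset: "centralizer G z \<subseteq> carrier G"
  unfolding centralizer_def by auto

lemma (in group) orbits_conjugation: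
  "orbits G (carrier G) (\<lambda>g. \<lambda>h\<in>carrier G. g \<otimes> h \<otimes> inv g) = conj_classes G"
  unfolding orbits_def orbit_def conj_classes_def conj_class_def by auto

lemma (in group) conj_class_self:
  "z \<in> carrier G \<Longrightarrow> z \<in> conj_class G z"
  unfolding conj_class_def by (force intro!: exI[of _ \<one>])

lemma (in group) sum_card_centralizer_conj_invariant:
  assumes fin: "finite (carrier G)" and S: "S \<subseteq> carrier G"
    and invariant: "\<And>g y. g \<in> carrier G \<Longrightarrow> y \<in> S \<Longrightarrow> g \<otimes> y \<otimes> inv g \<in> S"
  shows "(\<Sum>y\<in>S. card (centralizer G y)) = order G * card {C \<in> conj_classes G. C \<subseteq> S}"
proof -
  let ?\<phi> = "\<lambda>g. \<lambda>h\<in>carrier G. g \<otimes> h \<otimes> inv g"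
  interpret conj: group_action G "carrier G" ?\<phi> by (rule action_by_conjugation)
  define F where "F = {C \<in> conj_classes G. C \<subseteq> S}"
  have orbits: "C \<in> orbits G (carrier G) ?\<phi>" if "C \<in> F" for C
    using that orbits_conjugation unfolding F_def by auto
  have "\<Union>F = S"
  proof (intro equalityI subsetI)
    fix y assume y: "y \<in> S"
    then have "conj_class G y \<in> F"
      using S invariant unfolding F_def conj_classes_def conj_class_def by auto
    with y S show "y \<in> \<Union>F" using conj_class_self by blast
  qed (auto simp: F_def)
  have classes_carrier: "C \<subseteq> carrier G" if "C \<in> F" for C
    using that S unfolding F_def by auto
  have "finite F"
    using classes_carrier fin by (meson Pow_iff finite_Pow_iff finite_subset subsetI)
  moreover have "\<forall>A\<in>F. \<forall>B\<in>F. A \<noteq> B \<longrightarrow> A \<inter> B = {}"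
    using conj.disjoint_union orbits by blast
  ultimately have "(\<Sum>y\<in>\<Union>F. card (centralizer G y)) = (\<Sum>C\<in>F. \<Sum>y\<in>C. card (centralizer G y))"
    by (subst sum.Union_disjoint) (auto dest: classes_carrier intro: rev_finite_subset[OF fin])
  also have "\<dots> = (\<Sum>C\<in>F. order G)"
  proof (rule sum.cong)
    fix C assume C: "C \<in> F"
    have "(\<Sum>y\<in>C. card (centralizer G y)) = (\<Sum>y\<in>C. card (stabilizer G ?\<phi> y))"
      using classes_carrier[OF C] by (intro sum.cong) (auto simp: stabilizer_conjugation)
    then show "(\<Sum>y\<in>C. card (centralizer G y)) = order G"
      using conj.card_stablizer_sum[OF fin orbits[OF C]] by simp
  qed simp
  finally show ?thesis using \<open>\<Union>F = S\<close> by (simp add: F_def)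
qed

lemma (in group) card_mult_fiber:
  assumes H: "subgroup H G" and K: "subgroup K G" and a: "a \<in> H" and b: "b \<in> K"
  shows "card {p \<in> H \<times> K. fst p \<otimes> snd p = a \<otimes> b} = card (H \<inter> K)"
proof -
  have HG: "H \<subseteq> carrier G" and KG: "K \<subseteq> carrier G"
    using H K subgroup.subset by auto
  have ab_carrier: "a \<in> carrier G" "b \<in> carrier G"
    using a b HG KG by auto
  let ?f = "\<lambda>d. (a \<otimes> inv d, d \<otimes> b)"
  have "{p \<in> H \<times> K. fst p \<otimes> snd p = a \<otimes> b} = ?f ` (H \<inter> K)"
  proof (intro equalityI subsetI)
    fix p assume "p \<in> {p \<in> H \<times> K. fst p \<otimes> snd p = a \<otimes> b}"
    then obtain a' b' where p: "p = (a', b')" "a' \<in> H" "b' \<in> K" "a' \<otimes> b' = a \<otimes> b"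
      by auto
    have carrier: "a' \<in> carrier G" "b' \<in> carrier G"
      using p HG KG by auto
    define d where "d = b' \<otimes> inv b"
    have d_alt: "d = inv a' \<otimes> a"
      using p(4) carrier ab_carrier unfolding d_def
      by (metis inv_closed inv_solve_left' inv_solve_right' m_assoc m_closed)
    have "d \<in> H"
      unfolding d_alt using p a H by (simp add: subgroup.m_closed subgroup.m_inv_closed)
    moreover have "d \<in> K"
      unfolding d_def using p b K by (simp add: subgroup.m_closed subgroup.m_inv_closed)
    moreover have "a \<otimes> inv d = a'"
      unfolding d_alt using carrier ab_carrier by (simp add: inv_mult_group m_assoc[symmetric])
    moreover have "d \<otimes> b = b'"
      unfolding d_def using carrier ab_carrier by (simp add: m_assoc)
    ultimately show "p \<in> ?f ` (H \<inter> K)" using p(1) by force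
  next
    fix p assume "p \<in> ?f ` (H \<inter> K)"
    then obtain d where d: "d \<in> H" "d \<in> K" and p: "p = ?f d" by auto
    have "d \<in> carrier G" using d HG by auto
    then show "p \<in> {p \<in> H \<times> K. fst p \<otimes> snd p = a \<otimes> b}"
      using p d a b H K ab_carrier
      by (simp add: subgroup.m_closed subgroup.m_inv_closed m_assoc[symmetric])
        (simp add: m_assoc)
  qed
  moreover have "inj_on ?f (H \<inter> K)"
  proof (rule inj_onI)
    fix d e assume "d \<in> H \<inter> K" "e \<in> H \<inter> K" "?f d = ?f e"
    then show "d = e" using ab_carrier HG by (metis IntD1 Pair_inject r_cancel subsetD)
  qed
  ultimately show ?thesis by (simp add: card_image)
qed

lemma (in group) product_formula:
  assumes fin: "finite (carrier G)" and H: "subgroup H G" and K: "subgroup K G"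
    and HK: "H <#> K = carrier G"
  shows "card H * card K = order G * card (H \<inter> K)"
proof -
  have HG: "H \<subseteq> carrier G" and KG: "K \<subseteq> carrier G"
    using H K subgroup.subset by auto
  have finite: "finite H" "finite K"
    using fin HG KG rev_finite_subset by auto
  have "(\<Sum>p\<in>H \<times> K. card {g \<in> carrier G. fst p \<otimes> snd p = g}) = card (H \<inter> K) * order G"
    unfolding order_def
  proof (rule sum_multicount[OF _ fin], use finite in simp, intro ballI)
    fix g assume "g \<in> carrier G"
    then obtain a b where "a \<in> H" "b \<in> K" "g = a \<otimes> b"
      using HK unfolding set_mult_def by blast
    then show "card {p \<in> H \<times> K. fst p \<otimes> snd p = g} = card (H \<inter> K)"
      using card_mult_fiber[OF H K] by simp
  qed
  moreover have "{g \<in> carrier G. fst p \<otimes> snd p = g} = {fst p \<otimes> snd p}" if "p \<in> H \<times> K" for p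
    using that HG KG by (auto intro!: m_closed)
  ultimately show ?thesis
    using finite by (simp add: card_cartesian_product)
qed

lemma (in group) set_mult_eq_carrier_imp_meets_rcoset:
  assumes H: "subgroup H G" and K: "K \<subseteq> carrier G" and HK: "H <#> K = carrier G"
    and g: "g \<in> carrier G"
  shows "K \<inter> (H #> g) \<noteq> {}"
proof -
  obtain a c where a: "a \<in> H" and c: "c \<in> K" and g_eq: "g = a \<otimes> c"
    using HK g unfolding set_mult_def by blast
  have "a \<in> carrier G" "c \<in> carrier G"
    using subgroup.mem_carrier[OF H a] c K by auto
  then have "c = inv a \<otimes> g"
    using g_eq g by (simp add: inv_solve_left)
  then have "c \<in> H #> g"
    using a H g by (simp add: rcosI subgroup.m_inv_closed subgroup.subset)
  with c show ?thesis by blast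
qed

lemma (in group) card_Int_rcoset:
  assumes H: "subgroup H G" and K: "subgroup K G" and g: "g \<in> carrier G"
    and c: "c \<in> K" "c \<in> H #> g"
  shows "card (K \<inter> (H #> g)) = card (H \<inter> K)"
proof -
  have c_carrier: "c \<in> carrier G" using subgroup.mem_carrier[OF K c(1)] .
  have "K \<inter> (H #> g) = (H \<inter> K) #> c"
  proof (intro equalityI subsetI)
    fix y assume "y \<in> K \<inter> (H #> g)"
    then obtain a where y: "y \<in> K" and a: "a \<in> H" and y_eq: "y = a \<otimes> c"
      using repr_independence[OF c(2) g H] unfolding r_coset_def by auto
    have "a \<in> carrier G" using subgroup.mem_carrier[OF H a] .
    then have "a = y \<otimes> inv c"
      using y_eq c_carrier by (simp add: m_assoc)
    then have "a \<in> K"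
      using y c K by (simp add: subgroup.m_closed subgroup.m_inv_closed)
    with a y_eq show "y \<in> (H \<inter> K) #> c" unfolding r_coset_def by blast
  next
    fix y assume "y \<in> (H \<inter> K) #> c"
    then obtain a where a: "a \<in> H" "a \<in> K" and y_eq: "y = a \<otimes> c"
      unfolding r_coset_def by blast
    have "y \<in> H #> c" using a y_eq unfolding r_coset_def by blast
    then show "y \<in> K \<inter> (H #> g)"
      using repr_independence[OF c(2) g H] y_eq a c K by (simp add: subgroup.m_closed)
  qed
  moreover have "H \<inter> K \<subseteq> carrier G" using H subgroup.subset by blast
  ultimately show ?thesis
    using card_rcosets_equal rcosetsI c_carrier by metis
qed

lemma (in group) conj_mem_centralizer_conj:
  assumes "c \<in> centralizer G h" "h \<in> carrier G" "g \<in> carrier G"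
  shows "g \<otimes> c \<otimes> inv g \<in> centralizer G (g \<otimes> h \<otimes> inv g)"
proof -
  have c: "c \<in> carrier G" "c \<otimes> h = h \<otimes> c"
    using assms(1) unfolding centralizer_def by auto
  have cancel: "inv g \<otimes> (g \<otimes> w) = w" if "w \<in> carrier G" for w
    using that assms(3) by (simp add: m_assoc[symmetric])
  have "g \<otimes> c \<otimes> inv g \<otimes> (g \<otimes> h \<otimes> inv g) = g \<otimes> (c \<otimes> h) \<otimes> inv g"
    using c(1) assms(2,3) by (simp add: m_assoc cancel)
  also have "\<dots> = g \<otimes> (h \<otimes> c) \<otimes> inv g"
    using c by simp
  also have "\<dots> = g \<otimes> h \<otimes> inv g \<otimes> (g \<otimes> c \<otimes> inv g)"
    using c(1) assms(2,3) by (simp add: m_assoc cancel)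
  finally show ?thesis
    using c assms unfolding centralizer_def by simp
qed

lemma (in normal) set_mult_centralizer_conj:
  assumes HC: "H <#> centralizer G h = carrier G" and h: "h \<in> carrier G" and g: "g \<in> carrier G"
  shows "H <#> centralizer G (g \<otimes> h \<otimes> inv g) = carrier G"
proof
  show "H <#> centralizer G (g \<otimes> h \<otimes> inv g) \<subseteq> carrier G"
    by (rule set_mult_closed[OF subset centralizer_subset])
  show "carrier G \<subseteq> H <#> centralizer G (g \<otimes> h \<otimes> inv g)"
  proof
    fix a assume a: "a \<in> carrier G"
    then have "inv g \<otimes> a \<otimes> g \<in> H <#> centralizer G h" using HC g by simp
    then obtain k c where k: "k \<in> H" and c: "c \<in> centralizer G h"
      and kc: "inv g \<otimes> a \<otimes> g = k \<otimes> c"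
      unfolding set_mult_def by blast
    have carrier: "k \<in> carrier G" "c \<in> carrier G"
      using k c subset centralizer_subset by auto
    have "a = g \<otimes> (inv g \<otimes> a \<otimes> g) \<otimes> inv g"
      using a g by (simp add: m_assoc[symmetric]) (simp add: m_assoc)
    also have "\<dots> = (g \<otimes> k \<otimes> inv g) \<otimes> (g \<otimes> c \<otimes> inv g)"
      using kc carrier g by (simp add: m_assoc[symmetric]) (simp add: m_assoc)
    finally show "a \<in> H <#> centralizer G (g \<otimes> h \<otimes> inv g)"
      using inv_op_closed2[OF g k] conj_mem_centralizer_conj[OF c h g]
      unfolding set_mult_def by blast
  qed
qed

lemma (in normal) conj_mem_rcoset:
  assumes HC: "H <#> centralizer G y = carrier G" and y: "y \<in> carrier G" and g: "g \<in> carrier G"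
  shows "g \<otimes> y \<otimes> inv g \<in> H #> y"
proof -
  obtain k c where k: "k \<in> H" and c: "c \<in> centralizer G y" and g_eq: "g = k \<otimes> c"
    using HC g unfolding set_mult_def by blast
  have carrier: "k \<in> carrier G" "c \<in> carrier G" and cy: "c \<otimes> y = y \<otimes> c"
    using k c subset unfolding centralizer_def by auto
  have "g \<otimes> y \<otimes> inv g = k \<otimes> (c \<otimes> y) \<otimes> inv c \<otimes> inv k"
    using g_eq carrier y by (simp add: m_assoc inv_mult_group)
  also have "\<dots> = (k \<otimes> (y \<otimes> inv k \<otimes> inv y)) \<otimes> y"
    using cy carrier y by (simp add: m_assoc)
  finally show ?thesis
    using inv_op_closed2[OF y m_inv_closed[OF k]] k y
    by (simp add: rcosI subset m_closed)
qed

lemma (in group) sum_card_Int_centralizer_swap: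
  assumes "finite A" "finite B" "A \<subseteq> carrier G" "B \<subseteq> carrier G"
  shows "(\<Sum>y\<in>B. card (A \<inter> centralizer G y)) = (\<Sum>a\<in>A. card (centralizer G a \<inter> B))"
proof -
  have "(\<Sum>a\<in>A. card {y \<in> B. a \<otimes> y = y \<otimes> a}) = (\<Sum>y\<in>B. card {a \<in> A. a \<otimes> y = y \<otimes> a})"
    by (rule sum_multicount_gen) (use assms in auto)
  moreover have "centralizer G a \<inter> B = {y \<in> B. a \<otimes> y = y \<otimes> a}" if "a \<in> A" for a
    using that assms unfolding centralizer_def by auto
  moreover have "A \<inter> centralizer G y = {a \<in> A. a \<otimes> y = y \<otimes> a}" for y
    using assms unfolding centralizer_def by auto
  ultimately show ?thesis by simp
qed

lemma (in group) card_mult_sum_card_centralizer: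
  assumes fin: "finite (carrier G)" and H: "subgroup H G" and S: "S \<subseteq> carrier G"
    and HC: "\<And>y. y \<in> S \<Longrightarrow> H <#> centralizer G y = carrier G"
  shows "card H * (\<Sum>y\<in>S. card (centralizer G y)) = order G * (\<Sum>y\<in>S. card (H \<inter> centralizer G y))"
proof -
  have "card H * card (centralizer G y) = order G * card (H \<inter> centralizer G y)" if "y \<in> S" for y
    using product_formula[OF fin H centralizer_subgroup HC[OF that]] that S by blast
  then show ?thesis by (simp add: sum_distrib_left)
qed

locale cyclic_quotient = normal H G for H and G (structure) +
  fixes x
  assumes generator_carrier: "x \<in> carrier G"
    and coset_generates: "carrier (G Mod H) = generate (G Mod H) {H #> x}"
begin

lemma generating_coset_subset: "H #> x \<subseteq> carrier G"
  by (rule r_coset_subset_G[OF subset generator_carrier])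

lemma rcoset_eq_generator_int_pow:
  assumes "g \<in> carrier G"
  shows "\<exists>k::int. H #> g = H #> x [^] k"
proof -
  interpret Q: group "G Mod H" by (rule factorgroup_is_group)
  have "H #> g \<in> carrier (G Mod H)" and x_coset: "H #> x \<in> carrier (G Mod H)"
    using assms generator_carrier unfolding FactGroup_def by (simp_all add: rcosetsI subset)
  then have "H #> g \<in> {(H #> x) [^]\<^bsub>G Mod H\<^esub> (k::int) | k. k \<in> UNIV}"
    using coset_generates Q.generate_pow[OF x_coset] by simp
  then obtain k :: int where "H #> g = (H #> x) [^]\<^bsub>G Mod H\<^esub> k"
    by blast
  then show ?thesis
    using hom_int_pow[OF r_coset_hom_Mod generator_carrier is_group Q.is_group] by auto
qed

lemma set_mult_eq_carrier_iff:
  assumes K: "subgroup K G"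
  shows "H <#> K = carrier G \<longleftrightarrow> K \<inter> (H #> x) \<noteq> {}"
proof
  assume "H <#> K = carrier G"
  then show "K \<inter> (H #> x) \<noteq> {}"
    using set_mult_eq_carrier_imp_meets_rcoset subgroup_axioms subgroup.subset[OF K]
      generator_carrier by blast
next
  assume "K \<inter> (H #> x) \<noteq> {}"
  then obtain c where c: "c \<in> K" "c \<in> H #> x" by blast
  have c_carrier: "c \<in> carrier G" using subgroup.mem_carrier[OF K c(1)] .
  show "H <#> K = carrier G"
  proof
    show "H <#> K \<subseteq> carrier G"
      by (rule set_mult_closed[OF subset subgroup.subset[OF K]])
    show "carrier G \<subseteq> H <#> K"
    proof
      fix g assume g: "g \<in> carrier G"
      interpret Q: group "G Mod H" by (rule factorgroup_is_group)
      have int_pow: "H #> a [^] k = (H #> a) [^]\<^bsub>G Mod H\<^esub> k" if "a \<in> carrier G" for a and k :: int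
        using hom_int_pow[OF r_coset_hom_Mod that is_group Q.is_group] .
      obtain k :: int where "H #> g = H #> x [^] k"
        using rcoset_eq_generator_int_pow[OF g] by blast
      also have "\<dots> = H #> c [^] k"
        using int_pow c_carrier generator_carrier
          repr_independence[OF c(2) generator_carrier subgroup_axioms] by simp
      finally have "g \<in> H #> c [^] k"
        using rcos_self[OF g subgroup_axioms] by simp
      then show "g \<in> H <#> K"
        using subgroup_int_pow_closed[OF K c(1)] unfolding r_coset_def set_mult_def by blast
    qed
  qed
qed

lemma set_mult_centralizer_eq_carrier:
  assumes "y \<in> H #> x"
  shows "H <#> centralizer G y = carrier G"
proof -
  have "y \<in> carrier G" using assms generating_coset_subset by blast
  then have "y \<in> centralizer G y \<inter> (H #> x)"
    using assms unfolding centralizer_def by simp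
  then show ?thesis
    using set_mult_eq_carrier_iff[OF centralizer_subgroup] \<open>y \<in> carrier G\<close> by blast
qed

lemma conj_mem_generating_coset:
  assumes y: "y \<in> H #> x" and g: "g \<in> carrier G"
  shows "g \<otimes> y \<otimes> inv g \<in> H #> x"
proof -
  have "y \<in> carrier G" using y generating_coset_subset by blast
  then show ?thesis
    using conj_mem_rcoset[OF set_mult_centralizer_eq_carrier[OF y] _ g]
      repr_independence[OF y generator_carrier subgroup_axioms] by simp
qed

lemma card_centralizer_Int_coset:
  assumes h: "h \<in> carrier G"
  shows "card (centralizer G h \<inter> (H #> x))
    = (if H <#> centralizer G h = carrier G then card (H \<inter> centralizer G h) else 0)"
proof (cases "H <#> centralizer G h = carrier G")
  case True
  then obtain c where "c \<in> centralizer G h" "c \<in> H #> x"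
    using set_mult_eq_carrier_iff[OF centralizer_subgroup[OF h]] by blast
  then show ?thesis
    using True card_Int_rcoset[OF subgroup_axioms centralizer_subgroup[OF h] generator_carrier]
    by simp
next
  case False
  then show ?thesis
    using set_mult_eq_carrier_iff[OF centralizer_subgroup[OF h]] by simp
qed

lemma sum_card_Int_centralizer_coset:
  assumes fin: "finite (carrier G)"
  shows "(\<Sum>y\<in>H #> x. card (H \<inter> centralizer G y))
    = (\<Sum>h\<in>{h \<in> H. H <#> centralizer G h = carrier G}. card (H \<inter> centralizer G h))"
proof -
  have "finite H" "finite (H #> x)"
    using fin subset generating_coset_subset rev_finite_subset by auto
  then have "(\<Sum>y\<in>H #> x. card (H \<inter> centralizer G y)) = (\<Sum>h\<in>H. card (centralizer G h \<inter> (H #> x)))"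
    using sum_card_Int_centralizer_swap subset generating_coset_subset by blast
  also have "\<dots> = (\<Sum>h\<in>H. if H <#> centralizer G h = carrier G then card (H \<inter> centralizer G h) else 0)"
    using card_centralizer_Int_coset subset by (intro sum.cong) auto
  finally show ?thesis
    using \<open>finite H\<close> by (simp add: sum.inter_filter)
qed

lemma sum_card_centralizer_coset_eq:
  assumes fin: "finite (carrier G)"
  shows "(\<Sum>y\<in>H #> x. card (centralizer G y))
    = (\<Sum>h\<in>{h \<in> H. H <#> centralizer G h = carrier G}. card (centralizer G h))"
proof -
  let ?I = "{h \<in> H. H <#> centralizer G h = carrier G}"
  have I: "?I \<subseteq> carrier G" using subset by auto
  have "card H * (\<Sum>y\<in>H #> x. card (centralizer G y))
      = order G * (\<Sum>y\<in>H #> x. card (H \<inter> centralizer G y))"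
    using card_mult_sum_card_centralizer[OF fin subgroup_axioms generating_coset_subset]
      set_mult_centralizer_eq_carrier by blast
  also have "\<dots> = order G * (\<Sum>h\<in>?I. card (H \<inter> centralizer G h))"
    using sum_card_Int_centralizer_coset[OF fin] by simp
  also have "\<dots> = card H * (\<Sum>h\<in>?I. card (centralizer G h))"
    by (rule card_mult_sum_card_centralizer[OF fin subgroup_axioms I, symmetric]) simp
  finally show ?thesis
    using rev_finite_subset[OF fin subset] subgroup.one_closed[OF subgroup_axioms]
    by (metis card_0_eq empty_iff mult_left_cancel)
qed

end

theorem lemma2p2:
  fixes G (structure) and H :: "'a set" and x :: 'a
  assumes "group G"
    and "finite (carrier G)"
    and "H \<lhd> G"
    and "x \<in> carrier G"
    and "carrier (G Mod H) = generate (G Mod H) {H #> x}"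
  shows "card {C \<in> conj_classes G. C \<subseteq> H #> x}
       = card {C \<in> conj_classes G. C \<subseteq> H \<and> integral_class G H C}"
proof -
  interpret cyclic_quotient H G x
    using assms by (simp add: cyclic_quotient_def cyclic_quotient_axioms_def)
  define I where "I = {h \<in> H. H <#> centralizer G h = carrier G}"
  have I: "I \<subseteq> carrier G" using subset unfolding I_def by auto
  have "order G * card {C \<in> conj_classes G. C \<subseteq> H #> x} = (\<Sum>y\<in>H #> x. card (centralizer G y))"
    using sum_card_centralizer_conj_invariant[OF assms(2) generating_coset_subset] conj_mem_generating_coset by simp
  also have "\<dots> = (\<Sum>h\<in>I. card (centralizer G h))"
    unfolding I_def by (rule sum_card_centralizer_coset_eq[OF assms(2)])
  also have "\<dots> = order G * card {C \<in> conj_classes G. C \<subseteq> I}"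
    using sum_card_centralizer_conj_invariant[OF assms(2) I] inv_op_closed2 set_mult_centralizer_conj I
    unfolding I_def by auto
  also have "{C \<in> conj_classes G. C \<subseteq> I} = {C \<in> conj_classes G. C \<subseteq> H \<and> integral_class G H C}"
    unfolding I_def integral_class_def centralizing_subgroup_def by auto
  finally show ?thesis
    using assms(2) order_gt_0_iff_finite by simp
qed

end
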